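(* For every real Banach space $X$ with $\dim X\ge 2$ and all $\alpha,\beta>0$, $$DW(X,\alpha,\beta)\ge(\alpha+\beta)\max\{2\rho_X'(0),1\}.$$
   Context: For $\alpha,\beta>0$, $$DW(X,\alpha,\beta)=\sup\left\{\frac{\alpha\|x\|+\beta\|y\|}{\|x-y\|}\left\|\frac{x}{\|x\|}-\frac{y}{\|y\|}\right\|: x,y\in X\setminus\{0\},\ x\neq y\right\}.$$ The Lindenstrauss modulus of smoothness is $\rho_X(t)=\sup\{\tfrac12(\|x+ty\|+\|x-ty\|)-1: x,y\in B_X\}$ for $t\ge0$ ($B_X$ the closed unit ball), and $\rho_X'(0)=\lim_{t\to0^+}\rho_X(t)/t$ is the characteristic of smoothness. *)

theory Defs
  imports "HOL-Analysis.Analysis"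
begin

text \<open>The constant DW(X,alpha,beta), valued in the extended reals (the supremum may be infinite).\<close>
definition DW :: "'a::real_normed_vector itself \<Rightarrow> real \<Rightarrow> real \<Rightarrow> ereal" where
  "DW _ \<alpha> \<beta> = Sup {ereal ((\<alpha> * norm x + \<beta> * norm y) / norm (x - y)
                          * norm (x /\<^sub>R norm x - y /\<^sub>R norm y))
                     | x y :: 'a. x \<noteq> 0 \<and> y \<noteq> 0 \<and> x \<noteq> y}"

definition rho_mod :: "'a::real_normed_vector itself \<Rightarrow> real \<Rightarrow> real" where
  "rho_mod _ t = Sup {(norm (x + t *\<^sub>R y) + norm (x - t *\<^sub>R y)) / 2 - 1
                     | x y :: 'a. norm x \<le> 1 \<and> norm y \<le> 1}"

definition rho_char :: "'a::real_normed_vector itself \<Rightarrow> real" where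
  "rho_char X = Lim (at_right 0) (\<lambda>t. rho_mod X t / t)"

end

theory Submission
  imports Defs
begin

text \<open>
  Test DW on the pair \<open>x + t y\<close>, \<open>x\<close> with \<open>x, y\<close> in the unit ball: the distance of the two
  points is at most \<open>t\<close>, while the distance of their normalisations is at least
  \<open>2\<phi> / \<parallel>x + t y\<parallel>\<close>, where \<open>\<phi> = (\<parallel>x + t y\<parallel> + \<parallel>x - t y\<parallel>) / 2 - 1\<close>. Taking the supremum over
  \<open>x, y\<close> gives \<open>DW \<ge> 2 (\<alpha> + \<beta> (1 - t)) \<rho>(t) / t\<close>, and \<open>t \<rightarrow> 0\<^sup>+\<close> yields the bound
  \<open>2 (\<alpha> + \<beta>) \<rho>'(0)\<close>; the limit exists because \<open>\<rho>(t) / t\<close> is monotone by convexity.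
  The bound \<open>\<alpha> + \<beta>\<close> comes from an antipodal pair \<open>x, -x\<close>.
\<close>

definition smoothness_term :: "'a::real_normed_vector \<Rightarrow> 'a \<Rightarrow> real \<Rightarrow> real" where
  "smoothness_term x y t = (norm (x + t *\<^sub>R y) + norm (x - t *\<^sub>R y)) / 2 - 1"

lemma rho_mod_eq_Sup_smoothness_term:
  "rho_mod TYPE('a::real_normed_vector) t =
     Sup {smoothness_term x y t | x y :: 'a. norm x \<le> 1 \<and> norm y \<le> 1}"
  by (simp add: rho_mod_def smoothness_term_def)

lemma smoothness_term_le:
  assumes "norm x \<le> 1" "norm y \<le> 1" "0 \<le> t"
  shows "smoothness_term x y t \<le> t"
proof -
  have "norm (x + t *\<^sub>R y) \<le> 1 + t" "norm (x - t *\<^sub>R y) \<le> 1 + t"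
    using norm_triangle_ineq[of x "t *\<^sub>R y"] norm_triangle_ineq4[of x "t *\<^sub>R y"]
      mult_left_le[of "norm y" t] assms by auto
  then show ?thesis
    by (simp add: smoothness_term_def field_simps)
qed

lemma smoothness_term_le_rho_mod:
  fixes x y :: "'a::real_normed_vector"
  assumes "norm x \<le> 1" "norm y \<le> 1" "0 \<le> t"
  shows "smoothness_term x y t \<le> rho_mod TYPE('a) t"
  unfolding rho_mod_eq_Sup_smoothness_term
  by (rule cSup_upper) (use assms smoothness_term_le in \<open>auto intro!: bdd_aboveI\<close>)

lemma rho_mod_le:
  assumes "\<And>x y :: 'a::real_normed_vector.
             norm x \<le> 1 \<Longrightarrow> norm y \<le> 1 \<Longrightarrow> smoothness_term x y t \<le> M"
  shows "rho_mod TYPE('a) t \<le> M"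
  unfolding rho_mod_eq_Sup_smoothness_term
proof (rule cSup_least)
  have "norm (0::'a) \<le> 1"
    by simp
  then show "{smoothness_term x y t | x y :: 'a. norm x \<le> 1 \<and> norm y \<le> 1} \<noteq> {}"
    by blast
qed (use assms in auto)

lemma rho_mod_nonneg:
  assumes "(e::'a::real_normed_vector) \<noteq> 0" "0 \<le> t"
  shows "0 \<le> rho_mod TYPE('a) t"
  using smoothness_term_le_rho_mod[of "e /\<^sub>R norm e" 0 t] assms
  by (simp add: smoothness_term_def)

text \<open>Convexity of \<open>t \<mapsto> \<parallel>x \<pm> t y\<parallel>\<close>, compared with the value \<open>\<parallel>x\<parallel> \<le> 1\<close> at \<open>t = 0\<close>.\<close>
lemma smoothness_term_scale_le:
  assumes "norm x \<le> 1" "0 \<le> c" "c \<le> 1"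
  shows "smoothness_term x y (c * t) \<le> c * smoothness_term x y t"
proof -
  have "norm (x + s *\<^sub>R (c * t) *\<^sub>R y) \<le> (1 - c) + c * norm (x + s *\<^sub>R t *\<^sub>R y)" for s
  proof -
    have "x + s *\<^sub>R (c * t) *\<^sub>R y = (1 - c) *\<^sub>R x + c *\<^sub>R (x + s *\<^sub>R t *\<^sub>R y)"
      by (simp add: algebra_simps)
    also have "norm \<dots> \<le> (1 - c) * norm x + c * norm (x + s *\<^sub>R t *\<^sub>R y)"
      using norm_triangle_ineq[of "(1 - c) *\<^sub>R x" "c *\<^sub>R (x + s *\<^sub>R t *\<^sub>R y)"] assms by simp
    also have "(1 - c) * norm x \<le> 1 - c"
      using assms by (simp add: mult_left_le)
    finally show ?thesis by simp
  qed
  from this[of 1] this[of "-1"] show ?thesis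
    by (simp add: smoothness_term_def field_simps)
qed

lemma rho_mod_scale_le:
  assumes "0 \<le> c" "c \<le> 1" "0 \<le> t"
  shows "rho_mod TYPE('a::real_normed_vector) (c * t) \<le> c * rho_mod TYPE('a) t"
proof (rule rho_mod_le)
  fix x y :: 'a
  assume "norm x \<le> 1" "norm y \<le> 1"
  then have "smoothness_term x y (c * t) \<le> c * smoothness_term x y t"
    "smoothness_term x y t \<le> rho_mod TYPE('a) t"
    using smoothness_term_scale_le smoothness_term_le_rho_mod assms by blast+
  then show "smoothness_term x y (c * t) \<le> c * rho_mod TYPE('a) t"
    using assms by (meson mult_left_mono order_trans)
qed

lemma rho_mod_divide_mono:
  assumes "0 < s" "s \<le> t"
  shows "rho_mod TYPE('a::real_normed_vector) s / s \<le> rho_mod TYPE('a) t / t"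
proof -
  have "rho_mod TYPE('a) ((s / t) * t) \<le> (s / t) * rho_mod TYPE('a) t"
    using assms by (intro rho_mod_scale_le) auto
  then show ?thesis
    using assms by (simp add: field_simps)
qed

lemma tendsto_rho_char:
  assumes "(e::'a::real_normed_vector) \<noteq> 0"
  shows "((\<lambda>t. rho_mod TYPE('a) t / t) \<longlongrightarrow> rho_char TYPE('a)) (at_right 0)"
proof -
  have "((\<lambda>t. rho_mod TYPE('a) t / t)
          \<longlongrightarrow> Inf ((\<lambda>t. rho_mod TYPE('a) t / t) ` ({0<..} \<inter> UNIV)))
          (at 0 within ({0<..} \<inter> UNIV))"
    by (rule Lim_right_bound)
      (use rho_mod_divide_mono rho_mod_nonneg[OF assms] in \<open>auto intro: divide_nonneg_pos\<close>)
  then show ?thesis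
    unfolding rho_char_def by (simp add: tendsto_Lim)
qed

lemma le_DW:
  fixes x y :: "'a::real_normed_vector"
  assumes "x \<noteq> 0" "y \<noteq> 0" "x \<noteq> y"
  shows "ereal ((\<alpha> * norm x + \<beta> * norm y) / norm (x - y)
           * norm (x /\<^sub>R norm x - y /\<^sub>R norm y)) \<le> DW TYPE('a) \<alpha> \<beta>"
  unfolding DW_def by (rule Sup_upper) (use assms in blast)

lemma add_le_DW:
  assumes "(e::'a::real_normed_vector) \<noteq> 0"
  shows "ereal (\<alpha> + \<beta>) \<le> DW TYPE('a) \<alpha> \<beta>"
proof -
  have double: "e - - e = 2 *\<^sub>R e"
      "e /\<^sub>R norm e - - e /\<^sub>R norm (- e) = 2 *\<^sub>R (e /\<^sub>R norm e)"
    by (metis scaleR_2 diff_minus_eq_add,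
        metis norm_minus_cancel scaleR_2 scaleR_minus_right diff_minus_eq_add)
  then have "e \<noteq> - e"
    using assms by (metis diff_self scaleR_eq_0_iff zero_neq_numeral)
  moreover have "(\<alpha> * norm e + \<beta> * norm (- e)) / norm (2 *\<^sub>R e) * norm (2 *\<^sub>R (e /\<^sub>R norm e))
                  = \<alpha> + \<beta>"
    using assms by (simp add: field_simps)
  ultimately show ?thesis
    using le_DW[of e "- e" \<alpha> \<beta>] assms unfolding double by simp
qed

lemma norm_diff_normalized_ge:
  fixes u x :: "'a::real_normed_vector"
  assumes "x \<noteq> 0" "norm u \<le> 2 * norm x"
  shows "norm u + norm (2 *\<^sub>R x - u) - 2 * norm x
           \<le> norm u * norm (u /\<^sub>R norm u - x /\<^sub>R norm x)"
proof (cases "u = 0")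
  case True
  then show ?thesis by simp
next
  case False
  define c where "c = 2 - norm u / norm x"
  have "norm (c *\<^sub>R x) = 2 * norm x - norm u"
    using assms by (simp add: c_def field_simps)
  have "norm u *\<^sub>R (u /\<^sub>R norm u - x /\<^sub>R norm x) = c *\<^sub>R x - (2 *\<^sub>R x - u)"
    using False by (simp add: c_def algebra_simps divide_inverse)
  then have "norm u * norm (u /\<^sub>R norm u - x /\<^sub>R norm x) = norm (c *\<^sub>R x - (2 *\<^sub>R x - u))"
    by (metis abs_norm_cancel norm_scaleR)
  also have "\<dots> \<ge> norm (2 *\<^sub>R x - u) - norm (c *\<^sub>R x)"
    by (metis norm_minus_commute norm_triangle_ineq2)
  finally show ?thesis
    using \<open>norm (c *\<^sub>R x) = 2 * norm x - norm u\<close> by linarith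
qed

lemma smoothness_term_bound_le_DW:
  fixes x y :: "'a::real_normed_vector"
  assumes "norm x \<le> 1" "norm y \<le> 1" "0 < t" "t \<le> 1/2" "0 \<le> \<alpha>" "0 \<le> \<beta>"
    and pos: "0 < smoothness_term x y t"
  shows "ereal ((\<alpha> + \<beta> * (1 - t)) * (2 * smoothness_term x y t) / t) \<le> DW TYPE('a) \<alpha> \<beta>"
proof -
  define u where "u = x + t *\<^sub>R y"
  define \<phi> where "\<phi> = smoothness_term x y t"
  define A where "A = norm (u /\<^sub>R norm u - x /\<^sub>R norm x)"
  define N where "N = \<alpha> * norm u + \<beta> * norm x"
  have ty: "norm (t *\<^sub>R y) \<le> t"
    using assms by (simp add: mult_left_le)
  have u_le: "norm u \<le> norm x + t" and w_le: "norm (x - t *\<^sub>R y) \<le> norm x + t"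
    using norm_triangle_ineq[of x "t *\<^sub>R y"] norm_triangle_ineq4[of x "t *\<^sub>R y"] ty
    by (auto simp: u_def)
  have sum_eq: "norm u + norm (2 *\<^sub>R x - u) = 2 + 2 * \<phi>"
    by (simp add: u_def \<phi>_def smoothness_term_def scaleR_2)
  have x_gt: "1 - t < norm x"
    using u_le w_le sum_eq pos by (simp add: u_def \<phi>_def scaleR_2)
  then have "x \<noteq> 0" "norm u \<le> 2 * norm x"
    using u_le \<open>t \<le> 1/2\<close> by auto
  then have angle: "2 * \<phi> \<le> norm u * A"
    using norm_diff_normalized_ge[of x u] sum_eq assms(1) by (simp add: A_def)
  then have "u \<noteq> 0" "u \<noteq> x"
    using pos by (auto simp: A_def \<phi>_def)
  have dist: "norm (u - x) \<le> t"
    using ty by (simp add: u_def)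
  have "(1 - t) * norm u \<le> norm x"
  proof -
    have "(1 - t) * norm u \<le> (1 - t) * (norm x + t)"
      using u_le assms by (simp add: mult_left_mono)
    also have "\<dots> = norm x - t * (norm x + t - 1)"
      by (simp add: algebra_simps)
    also have "\<dots> \<le> norm x"
      using x_gt \<open>0 < t\<close> by simp
    finally show ?thesis .
  qed
  from mult_left_mono[OF this \<open>0 \<le> \<beta>\<close>]
  have "(\<alpha> + \<beta> * (1 - t)) * norm u \<le> N"
    by (simp add: N_def algebra_simps)
  have "(\<alpha> + \<beta> * (1 - t)) * (2 * \<phi>) \<le> (\<alpha> + \<beta> * (1 - t)) * (norm u * A)"
    using mult_left_mono[OF angle, of "\<alpha> + \<beta> * (1 - t)"] assms by simp
  also have "\<dots> \<le> N * A"
    using mult_right_mono[OF \<open>(\<alpha> + \<beta> * (1 - t)) * norm u \<le> N\<close>, of A] by (simp add: A_def)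
  finally have "(\<alpha> + \<beta> * (1 - t)) * (2 * \<phi>) / t \<le> N * A / t"
    using \<open>0 < t\<close> by (simp add: divide_right_mono)
  also have "N * A / t \<le> N * A / norm (u - x)"
    using dist \<open>u \<noteq> x\<close> assms by (intro divide_left_mono) (auto simp: N_def A_def)
  finally have "ereal ((\<alpha> + \<beta> * (1 - t)) * (2 * \<phi>) / t) \<le> ereal (N / norm (u - x) * A)"
    by simp
  also have "\<dots> \<le> DW TYPE('a) \<alpha> \<beta>"
    using le_DW[OF \<open>u \<noteq> 0\<close> \<open>x \<noteq> 0\<close> \<open>u \<noteq> x\<close>] by (simp add: N_def A_def)
  finally show ?thesis
    by (simp add: \<phi>_def)
qed

lemma ereal_mult_rho_mod_le:
  assumes "0 < k"
    and "\<And>x y :: 'a::real_normed_vector. norm x \<le> 1 \<Longrightarrow> norm y \<le> 1 \<Longrightarrow>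
           ereal (k * smoothness_term x y t) \<le> E"
  shows "ereal (k * rho_mod TYPE('a) t) \<le> E"
proof (cases E)
  case (real D)
  have "rho_mod TYPE('a) t \<le> D / k"
    by (rule rho_mod_le) (use assms real in \<open>simp add: pos_le_divide_eq mult.commute\<close>)
  then show ?thesis
    using assms real by (simp add: pos_le_divide_eq mult.commute)
next
  case MInf
  then show ?thesis
    using assms(2)[of 0 0] by simp
qed simp

lemma rho_mod_bound_le_DW:
  assumes "(e::'a::real_normed_vector) \<noteq> 0" "0 < t" "t \<le> 1/2" "0 < \<alpha>" "0 < \<beta>"
  shows "ereal ((\<alpha> + \<beta> * (1 - t)) * (2 * (rho_mod TYPE('a) t / t))) \<le> DW TYPE('a) \<alpha> \<beta>"
proof -
  define k where "k = (\<alpha> + \<beta> * (1 - t)) * 2 / t"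
  have "0 < k"
    using assms by (simp add: k_def add_pos_nonneg)
  have "ereal (k * rho_mod TYPE('a) t) \<le> DW TYPE('a) \<alpha> \<beta>"
  proof (rule ereal_mult_rho_mod_le[OF \<open>0 < k\<close>])
    fix x y :: 'a
    assume "norm x \<le> 1" "norm y \<le> 1"
    show "ereal (k * smoothness_term x y t) \<le> DW TYPE('a) \<alpha> \<beta>"
    proof (cases "0 < smoothness_term x y t")
      case True
      have "k * smoothness_term x y t = (\<alpha> + \<beta> * (1 - t)) * (2 * smoothness_term x y t) / t"
        by (simp add: k_def)
      with True show ?thesis
        using smoothness_term_bound_le_DW[of x y t \<alpha> \<beta>] \<open>norm x \<le> 1\<close> \<open>norm y \<le> 1\<close> assms
        by simp
    next
      case False
      then have "k * smoothness_term x y t \<le> 0"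
        using \<open>0 < k\<close> by (simp add: mult_nonneg_nonpos)
      then have "ereal (k * smoothness_term x y t) \<le> ereal (\<alpha> + \<beta>)"
        using assms by simp
      then show ?thesis
        using add_le_DW[OF assms(1)] by (rule order_trans)
    qed
  qed
  moreover have "(\<alpha> + \<beta> * (1 - t)) * (2 * (rho_mod TYPE('a) t / t)) = k * rho_mod TYPE('a) t"
    by (simp add: k_def)
  ultimately show ?thesis
    by simp
qed

theorem theorem4:
  fixes \<alpha> \<beta> :: real
  assumes dim2: "\<exists>u v :: 'a::banach. u \<noteq> v \<and> independent {u, v}"
    and "\<alpha> > 0" and "\<beta> > 0"
  shows "DW TYPE('a) \<alpha> \<beta> \<ge> ereal ((\<alpha> + \<beta>) * max (2 * rho_char TYPE('a)) 1)"
proof -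
  obtain e v :: 'a where "independent {e, v}"
    using dim2 by blast
  then have "e \<noteq> 0"
    using dependent_zero by blast
  have "((\<lambda>t. (\<alpha> + \<beta> * (1 - t)) * (2 * (rho_mod TYPE('a) t / t)))
          \<longlongrightarrow> (\<alpha> + \<beta> * (1 - 0)) * (2 * rho_char TYPE('a))) (at_right 0)"
    by (intro tendsto_mult tendsto_add tendsto_diff tendsto_const tendsto_ident_at
        tendsto_rho_char[OF \<open>e \<noteq> 0\<close>])
  then have "((\<lambda>t. ereal ((\<alpha> + \<beta> * (1 - t)) * (2 * (rho_mod TYPE('a) t / t))))
          \<longlongrightarrow> ereal ((\<alpha> + \<beta>) * (2 * rho_char TYPE('a)))) (at_right 0)"
    by (simp add: tendsto_ereal)
  moreover have "\<forall>\<^sub>F t in at_right 0.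
      ereal ((\<alpha> + \<beta> * (1 - t)) * (2 * (rho_mod TYPE('a) t / t))) \<le> DW TYPE('a) \<alpha> \<beta>"
    unfolding eventually_at_right_field
    using rho_mod_bound_le_DW[OF \<open>e \<noteq> 0\<close>] assms by (intro exI[of _ "1/2"]) auto
  ultimately have "ereal ((\<alpha> + \<beta>) * (2 * rho_char TYPE('a))) \<le> DW TYPE('a) \<alpha> \<beta>"
    by (rule tendsto_upperbound) simp
  then show ?thesis
    using add_le_DW[OF \<open>e \<noteq> 0\<close>, of \<alpha> \<beta>] assms by (simp add: max_mult_distrib_left)
qed

end
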